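(* Let $\mathfrak{H}$ be a fat indecomposable Hoffman graph with $\lambda_{\min}(\mathfrak{H})\ge-1-\tau$, where $\tau=\frac{1+\sqrt5}{2}$, and with at most two slim vertices. Then $\mathfrak{H}$ is isomorphic to one of $\mathfrak{H}_{\rm I}$, $\mathfrak{H}_{\rm II}$, $\mathfrak{H}_{\rm III}$, $\mathfrak{H}_{\rm IV}$, $\mathfrak{H}_{\rm XVI}$, $\mathfrak{H}_{\rm XVII}$.
   Context: A Hoffman graph $\mathfrak{H}$ is a finite simple graph $H$ together with a labeling of each vertex as slim or fat, such that every fat vertex is adjacent to at least one slim vertex and the fat vertices are pairwise non-adjacent. $V^s(\mathfrak{H})$ denotes the set of slim vertices and $N^f_{\mathfrak{H}}(x)$ the set of fat neighbours of $x$. $\mathfrak{H}$ is fat if every slim vertex has a fat neighbour. Isomorphisms are graph isomorphisms preserving labels. An induced Hoffman subgraph is a Hoffman graph whose underlying graph is an induced subgraph with inherited labels. Writing the adjacency matrix of $H$ with fat vertices last as $\begin{pmatrix}A_s & C\\ C^T & O\end{pmatrix}$, set $B(\mathfrak{H})=A_s-CC^T$; $\lambda_{\min}(\mathfrak{H})$ is its smallest eigenvalue. A decomposition of $\mathfrak{H}$ is a family $\{\mathfrak{H}^i\}_{i=1}^n$ of induced Hoffman subgraphs such that: (i) $V(\mathfrak{H})=\bigcup_i V(\mathfrak{H}^i)$; (ii) slim vertex sets of distinct members are disjoint; (iii) if $x\in V^s(\mathfrak{H}^i)$ and $y$ is a fat neighbour of $x$ in $\mathfrak{H}$, then $y\in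 V(\mathfrak{H}^i)$; (iv) if $x\in V^s(\mathfrak{H}^i)$, $y\in V^s(\mathfrak{H}^j)$, $i\neq j$, then $|N^f_{\mathfrak{H}}(x)\cap N^f_{\mathfrak{H}}(y)|\le 1$, with equality iff $x,y$ are adjacent. $\mathfrak{H}$ is indecomposable if it has no decomposition with $n\ge 2$. Named Hoffman graphs (slim vertices $v_i$, fat vertices $f_j$): $\mathfrak{H}_{\rm I}$: slim $v_1$, fat $f_1$, edge $v_1f_1$. $\mathfrak{H}_{\rm II}$: slim $v_1$, fat $f_1,f_2$, edges $v_1f_1,v_1f_2$. $\mathfrak{H}_{\rm III}$: slim $v_1,v_2$, fat $f_1$, edges $v_1f_1,v_2f_1$. $\mathfrak{H}_{\rm IV}$: slim $v_1,v_2$, fat $f_1,f_2$, edges $v_1v_2,v_1f_1,v_2f_2$. $\mathfrak{H}_{\rm XVI}$: slim $v_1,v_2$, fat $f_1,f_2,f_3$, edges $v_1v_2,v_1f_1,v_1f_2,v_2f_3$. $\mathfrak{H}_{\rm XVII}$: slim $v_1,v_2$, fat $f_1,f_2$, edges $v_1f_1,v_1f_2,v_2f_2$. *)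

theory Defs
  imports Complex_Main
begin

record 'a hgraph =
  verts :: "'a set"
  adj :: "'a \<Rightarrow> 'a \<Rightarrow> bool"
  fatv :: "'a set"

definition slimv :: "('a, 'b) hgraph_scheme \<Rightarrow> 'a set" where
  "slimv H = verts H - fatv H"

definition fat_nbrs :: "('a, 'b) hgraph_scheme \<Rightarrow> 'a \<Rightarrow> 'a set" where
  "fat_nbrs H x = {f \<in> fatv H. adj H x f}"

definition hoffman_graph :: "('a, 'b) hgraph_scheme \<Rightarrow> bool" where
  "hoffman_graph H \<longleftrightarrow>
     finite (verts H) \<and> verts H \<noteq> {} \<and> fatv H \<subseteq> verts H \<and>
     (\<forall>x y. adj H x y \<longrightarrow> x \<in> verts H \<and> y \<in> verts H) \<and>
     (\<forall>x y. adj H x y \<longrightarrow> adj H y x) \<and>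
     (\<forall>x. \<not> adj H x x) \<and>
     (\<forall>f\<in>fatv H. \<exists>x\<in>slimv H. adj H f x) \<and>
     (\<forall>f\<in>fatv H. \<forall>g\<in>fatv H. \<not> adj H f g)"

definition fat_hoffman :: "('a, 'b) hgraph_scheme \<Rightarrow> bool" where
  "fat_hoffman H \<longleftrightarrow> (\<forall>x\<in>slimv H. fat_nbrs H x \<noteq> {})"

definition induced :: "('a, 'b) hgraph_scheme \<Rightarrow> 'a set \<Rightarrow> 'a hgraph" where
  "induced H W = \<lparr>verts = W, adj = (\<lambda>x y. adj H x y \<and> x \<in> W \<and> y \<in> W),
                  fatv = fatv H \<inter> W\<rparr>"

text \<open>B(H) = A_s - C C^T, as a function on slim vertices.\<close>
definition Bmat :: "('a, 'b) hgraph_scheme \<Rightarrow> 'a \<Rightarrow> 'a \<Rightarrow> real" where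
  "Bmat H x y = (if adj H x y then 1 else 0) - real (card (fat_nbrs H x \<inter> fat_nbrs H y))"

definition is_eigenvalue_B :: "('a, 'b) hgraph_scheme \<Rightarrow> real \<Rightarrow> bool" where
  "is_eigenvalue_B H \<mu> \<longleftrightarrow>
     (\<exists>v :: 'a \<Rightarrow> real. (\<exists>x\<in>slimv H. v x \<noteq> 0) \<and>
        (\<forall>x\<in>slimv H. (\<Sum>y\<in>slimv H. Bmat H x y * v y) = \<mu> * v x))"

definition lambda_min_ge :: "('a, 'b) hgraph_scheme \<Rightarrow> real \<Rightarrow> bool" where
  "lambda_min_ge H c \<longleftrightarrow> (\<forall>\<mu>. is_eigenvalue_B H \<mu> \<longrightarrow> c \<le> \<mu>)"

definition decomposition :: "('a, 'b) hgraph_scheme \<Rightarrow> 'a set list \<Rightarrow> bool" where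
  "decomposition H Ws \<longleftrightarrow>
     (\<forall>W\<in>set Ws. W \<subseteq> verts H \<and> hoffman_graph (induced H W)) \<and>
     (\<Union>(set Ws)) = verts H \<and>
     (\<forall>i<length Ws. \<forall>j<length Ws. i \<noteq> j \<longrightarrow>
         slimv (induced H (Ws!i)) \<inter> slimv (induced H (Ws!j)) = {}) \<and>
     (\<forall>i<length Ws. \<forall>x\<in>slimv (induced H (Ws!i)). fat_nbrs H x \<subseteq> Ws!i) \<and>
     (\<forall>i<length Ws. \<forall>j<length Ws. i \<noteq> j \<longrightarrow>
        (\<forall>x\<in>slimv (induced H (Ws!i)). \<forall>y\<in>slimv (induced H (Ws!j)).
           card (fat_nbrs H x \<inter> fat_nbrs H y) \<le> 1 \<and>
           (card (fat_nbrs H x \<inter> fat_nbrs H y) = 1 \<longleftrightarrow> adj H x y)))"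

definition indecomposable :: "('a, 'b) hgraph_scheme \<Rightarrow> bool" where
  "indecomposable H \<longleftrightarrow> \<not> (\<exists>Ws. length Ws \<ge> 2 \<and> decomposition H Ws)"

definition hiso :: "('a, 'b) hgraph_scheme \<Rightarrow> ('c, 'd) hgraph_scheme \<Rightarrow> bool" where
  "hiso H K \<longleftrightarrow> (\<exists>\<phi>. bij_betw \<phi> (verts H) (verts K) \<and>
     (\<forall>x\<in>verts H. \<forall>y\<in>verts H. adj H x y \<longleftrightarrow> adj K (\<phi> x) (\<phi> y)) \<and>
     (\<forall>x\<in>verts H. x \<in> fatv H \<longleftrightarrow> \<phi> x \<in> fatv K))"

datatype hv = SV nat | FV nat

definition mk_hg :: "hv set \<Rightarrow> (hv \<times> hv) list \<Rightarrow> hv hgraph" where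
  "mk_hg V es = \<lparr>verts = V, adj = (\<lambda>x y. (x, y) \<in> set es \<or> (y, x) \<in> set es),
                 fatv = {v \<in> V. \<exists>n. v = FV n}\<rparr>"

definition H_I :: "hv hgraph" where
  "H_I = mk_hg {SV 1, FV 1} [(SV 1, FV 1)]"
definition H_II :: "hv hgraph" where
  "H_II = mk_hg {SV 1, FV 1, FV 2} [(SV 1, FV 1), (SV 1, FV 2)]"
definition H_III :: "hv hgraph" where
  "H_III = mk_hg {SV 1, SV 2, FV 1} [(SV 1, FV 1), (SV 2, FV 1)]"
definition H_IV :: "hv hgraph" where
  "H_IV = mk_hg {SV 1, SV 2, FV 1, FV 2} [(SV 1, SV 2), (SV 1, FV 1), (SV 2, FV 2)]"
definition H_XVI :: "hv hgraph" where
  "H_XVI = mk_hg {SV 1, SV 2, FV 1, FV 2, FV 3}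
     [(SV 1, SV 2), (SV 1, FV 1), (SV 1, FV 2), (SV 2, FV 3)]"
definition H_XVII :: "hv hgraph" where
  "H_XVII = mk_hg {SV 1, SV 2, FV 1, FV 2} [(SV 1, FV 1), (SV 1, FV 2), (SV 2, FV 2)]"

end

theory Submission
  imports Defs
begin

(*
  Since tau < 2, the bound forces every eigenvalue of B(H) to exceed -3.
  (1) With one slim vertex x, B(H) = (-|N^f(x)|), so x has one or two fat
      neighbours: H is H_I or H_II.
  (2) With two slim vertices x, y, the pair is "compatible" (condition (iv) of
      a decomposition) exactly when the off-diagonal entry B_xy vanishes; in
      that case the two stars {x} + N^f(x), {y} + N^f(y) decompose H.  So
      indecomposability gives B_xy <> 0, hence B_xy^2 >= 1, and the smaller
      eigenvalue of the 2x2 matrix B(H) is at most (B_xx + B_yy)/2 - 1.  This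
      yields |N^f(x)| + |N^f(y)| <= 3; the four remaining configurations are
      H_III, H_IV, H_XVI and H_XVII.
*)

lemma hoffman_adj_sym: "hoffman_graph H \<Longrightarrow> adj H x y \<Longrightarrow> adj H y x"
  unfolding hoffman_graph_def by blast

lemma hoffman_adj_irrefl: "hoffman_graph H \<Longrightarrow> \<not> adj H x x"
  unfolding hoffman_graph_def by blast

lemma hoffman_fat_not_adj:
  "hoffman_graph H \<Longrightarrow> f \<in> fatv H \<Longrightarrow> g \<in> fatv H \<Longrightarrow> \<not> adj H f g"
  unfolding hoffman_graph_def by blast

lemma fat_nbrs_subset_fatv: "fat_nbrs H x \<subseteq> fatv H"
  unfolding fat_nbrs_def by blast

lemma adj_fat_iff: "f \<in> fatv H \<Longrightarrow> adj H x f \<longleftrightarrow> f \<in> fat_nbrs H x"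
  unfolding fat_nbrs_def by blast

lemma adj_fat_iff':
  "hoffman_graph H \<Longrightarrow> f \<in> fatv H \<Longrightarrow> adj H f x \<longleftrightarrow> f \<in> fat_nbrs H x"
  using adj_fat_iff[of f H x] hoffman_adj_sym[of H x f] hoffman_adj_sym[of H f x] by blast

lemma finite_verts: "hoffman_graph H \<Longrightarrow> finite (verts H)"
  by (simp add: hoffman_graph_def)

lemma fatv_subset_verts: "hoffman_graph H \<Longrightarrow> fatv H \<subseteq> verts H"
  by (simp add: hoffman_graph_def)

lemma finite_fatv: "hoffman_graph H \<Longrightarrow> finite (fatv H)"
  by (rule finite_subset[OF fatv_subset_verts finite_verts])

lemma finite_fat_nbrs: "hoffman_graph H \<Longrightarrow> finite (fat_nbrs H x)"
  by (rule finite_subset[OF fat_nbrs_subset_fatv finite_fatv])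

lemma finite_slimv: "hoffman_graph H \<Longrightarrow> finite (slimv H)"
  unfolding slimv_def by (rule finite_Diff[OF finite_verts])

lemma slim_not_fat: "x \<in> slimv H \<Longrightarrow> x \<notin> fatv H"
  unfolding slimv_def by blast

lemma verts_slim_fat: "hoffman_graph H \<Longrightarrow> verts H = slimv H \<union> fatv H"
  unfolding slimv_def using fatv_subset_verts by blast

lemma fatv_eq_Union_fat_nbrs:
  assumes hg: "hoffman_graph H"
  shows "fatv H = (\<Union>x\<in>slimv H. fat_nbrs H x)"
proof
  show "fatv H \<subseteq> (\<Union>x\<in>slimv H. fat_nbrs H x)"
  proof
    fix f assume f: "f \<in> fatv H"
    then obtain x where "x \<in> slimv H" "adj H f x"
      using hg unfolding hoffman_graph_def by blast
    then show "f \<in> (\<Union>x\<in>slimv H. fat_nbrs H x)"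
      using adj_fat_iff'[OF hg f] by blast
  qed
  show "(\<Union>x\<in>slimv H. fat_nbrs H x) \<subseteq> fatv H"
    by (auto simp: fat_nbrs_def)
qed

text \<open>A Hoffman graph has a slim vertex, since every fat vertex has a slim neighbour.\<close>
lemma slimv_nonempty:
  assumes hg: "hoffman_graph H"
  shows "slimv H \<noteq> {}"
proof
  assume "slimv H = {}"
  then have "verts H = {}"
    using verts_slim_fat[OF hg] fatv_eq_Union_fat_nbrs[OF hg] by simp
  then show False using hg unfolding hoffman_graph_def by blast
qed

lemma fat_hoffman_card:
  assumes hg: "hoffman_graph H" and "fat_hoffman H" and "x \<in> slimv H"
  shows "1 \<le> card (fat_nbrs H x)"
proof -
  have "fat_nbrs H x \<noteq> {}" using assms unfolding fat_hoffman_def by blast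
  then show ?thesis using finite_fat_nbrs[OF hg, of x] by (simp add: Suc_le_eq card_gt_0_iff)
qed

section \<open>The matrix B(H)\<close>

lemma Bmat_diag: "hoffman_graph H \<Longrightarrow> Bmat H x x = - real (card (fat_nbrs H x))"
  by (simp add: Bmat_def hoffman_adj_irrefl)

lemma Bmat_sym:
  assumes "hoffman_graph H"
  shows "Bmat H y x = Bmat H x y"
proof -
  have "adj H y x \<longleftrightarrow> adj H x y" using hoffman_adj_sym[OF assms] by blast
  then show ?thesis by (simp add: Bmat_def Int_commute)
qed

text \<open>The entry B_xy vanishes exactly when x and y satisfy the compatibility
  condition (iv) in the definition of a decomposition.\<close>
lemma Bmat_zero_iff:
  "Bmat H x y = 0 \<longleftrightarrow>
     card (fat_nbrs H x \<inter> fat_nbrs H y) \<le> 1 \<and>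
     (card (fat_nbrs H x \<inter> fat_nbrs H y) = 1 \<longleftrightarrow> adj H x y)"
  by (cases "adj H x y") (auto simp: Bmat_def)

text \<open>B(H) has integer entries, so a nonzero entry has square at least 1.\<close>
lemma Bmat_nonzero_sq: "Bmat H x y \<noteq> 0 \<Longrightarrow> 1 \<le> (Bmat H x y)\<^sup>2"
proof -
  define k :: int
    where "k = (if adj H x y then 1 else 0) - int (card (fat_nbrs H x \<inter> fat_nbrs H y))"
  have "Bmat H x y = of_int k" by (simp add: Bmat_def k_def)
  moreover assume "Bmat H x y \<noteq> 0"
  ultimately have "1 \<le> \<bar>Bmat H x y\<bar>" by simp
  then show ?thesis using one_le_power[of "\<bar>Bmat H x y\<bar>" 2] by simp
qed

section \<open>Eigenvalues with one or two slim vertices\<close>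

lemma eigenvalue_one_slim:
  assumes "slimv H = {x}"
  shows "is_eigenvalue_B H (Bmat H x x)"
  unfolding is_eigenvalue_B_def by (rule exI[of _ "\<lambda>_. 1"]) (simp add: assms)

text \<open>For two slim vertices, B(H) is a symmetric 2x2 matrix; its smaller
  eigenvalue is (a + b - sqrt ((a - b)^2 + 4 d^2)) / 2, with eigenvector (d, mu - a).\<close>
lemma eigenvalue_two_slim:
  assumes S: "slimv H = {x, y}" and "x \<noteq> y"
    and sym: "Bmat H y x = Bmat H x y" and d0: "Bmat H x y \<noteq> 0"
  defines "a \<equiv> Bmat H x x" and "b \<equiv> Bmat H y y" and "d \<equiv> Bmat H x y"
  shows "is_eigenvalue_B H ((a + b - sqrt ((a - b)\<^sup>2 + 4 * d\<^sup>2)) / 2)"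
proof -
  define s where "s = sqrt ((a - b)\<^sup>2 + 4 * d\<^sup>2)"
  define \<mu> where "\<mu> = (a + b - s) / 2"
  have "s\<^sup>2 = (a - b)\<^sup>2 + 4 * d\<^sup>2" unfolding s_def by simp
  then have char: "(\<mu> - a) * (\<mu> - b) = d\<^sup>2"
    unfolding \<mu>_def by (simp add: field_simps power2_eq_square)
  define v where "v z = (if z = x then d else \<mu> - a)" for z
  have row_x: "a * v x + d * v y = \<mu> * v x"
    using \<open>x \<noteq> y\<close> by (simp add: v_def algebra_simps)
  have row_y: "d * v x + b * v y = \<mu> * v y"
    using \<open>x \<noteq> y\<close> char by (simp add: v_def algebra_simps power2_eq_square)
  have "\<forall>z\<in>slimv H. (\<Sum>w\<in>slimv H. Bmat H z w * v w) = \<mu> * v z"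
    using row_x row_y sym \<open>x \<noteq> y\<close> by (auto simp: S a_def b_def d_def)
  moreover have "v x \<noteq> 0" using d0 by (simp add: v_def d_def)
  ultimately show ?thesis unfolding is_eigenvalue_B_def \<mu>_def s_def using S by blast
qed

text \<open>tau < 2, so the bound -1 - tau is larger than -3.\<close>
lemma golden_ratio_lt_2: "(1 + sqrt 5) / 2 < (2::real)"
proof -
  have "sqrt 5 < 3" by (rule real_less_lsqrt) auto
  then show ?thesis by simp
qed

lemma one_slim_fat_bound:
  assumes "hoffman_graph H" and "lambda_min_ge H (-1 - (1 + sqrt 5) / 2)"
    and "slimv H = {x}"
  shows "card (fat_nbrs H x) \<le> 2"
proof -
  have "-1 - (1 + sqrt 5) / 2 \<le> Bmat H x x"
    using assms(2) eigenvalue_one_slim[OF assms(3)] unfolding lambda_min_ge_def by blast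
  then have "real (card (fat_nbrs H x)) < 3"
    using golden_ratio_lt_2 Bmat_diag[OF assms(1), of x] by linarith
  then show ?thesis by simp
qed

text \<open>With two slim vertices and a nonzero off-diagonal entry, the smaller
  eigenvalue is at most (B_xx + B_yy)/2 - 1, which bounds the fat degrees.\<close>
lemma two_slim_fat_bound:
  assumes hg: "hoffman_graph H" and lm: "lambda_min_ge H (-1 - (1 + sqrt 5) / 2)"
    and S: "slimv H = {x, y}" and "x \<noteq> y" and d0: "Bmat H x y \<noteq> 0"
  shows "card (fat_nbrs H x) + card (fat_nbrs H y) \<le> 3"
proof -
  define a where "a = Bmat H x x"
  define b where "b = Bmat H y y"
  define d where "d = Bmat H x y"
  have "(2::real)\<^sup>2 \<le> (a - b)\<^sup>2 + 4 * d\<^sup>2"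
    using Bmat_nonzero_sq[OF d0] unfolding d_def by (simp add: add_increasing)
  then have "2 \<le> sqrt ((a - b)\<^sup>2 + 4 * d\<^sup>2)" by (rule real_le_rsqrt)
  moreover have "-1 - (1 + sqrt 5) / 2 \<le> (a + b - sqrt ((a - b)\<^sup>2 + 4 * d\<^sup>2)) / 2"
    using lm eigenvalue_two_slim[OF S \<open>x \<noteq> y\<close> Bmat_sym[OF hg] d0]
    unfolding lambda_min_ge_def a_def b_def d_def by blast
  then have "-3 < (a + b - sqrt ((a - b)\<^sup>2 + 4 * d\<^sup>2)) / 2"
    using golden_ratio_lt_2 by linarith
  ultimately have "-4 < a + b" by (auto simp: field_simps)
  then show ?thesis unfolding a_def b_def Bmat_diag[OF hg] by linarith
qed

section \<open>Compatible slim vertices: decomposition into stars\<close>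

definition star :: "('a, 'b) hgraph_scheme \<Rightarrow> 'a \<Rightarrow> 'a set" where
  "star H x = insert x (fat_nbrs H x)"

lemma slimv_star: "x \<in> slimv H \<Longrightarrow> slimv (induced H (star H x)) = {x}"
  unfolding slimv_def star_def induced_def fat_nbrs_def by auto

lemma hoffman_induced:
  assumes hg: "hoffman_graph H" and W: "W \<subseteq> verts H" "W \<noteq> {}"
    and fat_ok: "\<forall>f\<in>fatv H \<inter> W. \<exists>z\<in>W - fatv H. adj H f z"
  shows "hoffman_graph (induced H W)"
proof -
  have "finite W" using W(1) hg finite_subset unfolding hoffman_graph_def by blast
  moreover have "slimv (induced H W) = W - fatv H"
    unfolding slimv_def induced_def by auto
  ultimately show ?thesis
    using W fat_ok hoffman_adj_sym[OF hg] hoffman_adj_irrefl[OF hg] hoffman_fat_not_adj[OF hg]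
    unfolding hoffman_graph_def by (simp add: induced_def)
qed

lemma hoffman_star:
  assumes hg: "hoffman_graph H" and x: "x \<in> slimv H"
  shows "hoffman_graph (induced H (star H x))"
proof (rule hoffman_induced[OF hg])
  show "star H x \<subseteq> verts H"
    using x verts_slim_fat[OF hg] fat_nbrs_subset_fatv[of H x] unfolding star_def by blast
  show "\<forall>f\<in>fatv H \<inter> star H x. \<exists>z\<in>star H x - fatv H. adj H f z"
  proof
    fix f assume f: "f \<in> fatv H \<inter> star H x"
    then have "adj H f x"
      using adj_fat_iff'[OF hg, of f x] slim_not_fat[OF x] unfolding star_def by auto
    then show "\<exists>z\<in>star H x - fatv H. adj H f z"
      using slim_not_fat[OF x] unfolding star_def by blast
  qed
qed (simp add: star_def)

lemma stars_decomposition: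
  assumes hg: "hoffman_graph H" and xs: "distinct xs" "set xs = slimv H"
    and B0: "\<forall>x\<in>slimv H. \<forall>y\<in>slimv H. x \<noteq> y \<longrightarrow> Bmat H x y = 0"
  shows "decomposition H (map (star H) xs)"
proof -
  have slim_i: "slimv (induced H (star H (xs ! i))) = {xs ! i}" if "i < length xs" for i
    using slimv_star nth_mem[OF that] unfolding xs(2) .
  have distinct_i: "xs ! i \<noteq> xs ! j" if "i < length xs" "j < length xs" "i \<noteq> j" for i j
    using nth_eq_iff_index_eq[OF xs(1) that(1,2)] that(3) by simp
  have fat_nbrs_in_star: "fat_nbrs H x \<subseteq> star H x" for x
    unfolding star_def by blast
  have cover: "(\<Union>x\<in>slimv H. star H x) = verts H"
    using verts_slim_fat[OF hg] fatv_eq_Union_fat_nbrs[OF hg] unfolding star_def by auto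
  show ?thesis
    unfolding decomposition_def length_map
  proof (intro conjI)
    show "\<forall>W\<in>set (map (star H) xs). W \<subseteq> verts H \<and> hoffman_graph (induced H W)"
      using xs(2) cover hoffman_star[OF hg] by auto
    show "\<Union> (set (map (star H) xs)) = verts H"
      by (simp only: set_map xs(2) cover)
    show "\<forall>i<length xs. \<forall>j<length xs. i \<noteq> j \<longrightarrow>
        slimv (induced H (map (star H) xs ! i)) \<inter> slimv (induced H (map (star H) xs ! j)) = {}"
      using slim_i distinct_i by simp
    show "\<forall>i<length xs. \<forall>x\<in>slimv (induced H (map (star H) xs ! i)).
        fat_nbrs H x \<subseteq> map (star H) xs ! i"
      using slim_i fat_nbrs_in_star by simp
    show "\<forall>i<length xs. \<forall>j<length xs. i \<noteq> j \<longrightarrow>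
        (\<forall>x\<in>slimv (induced H (map (star H) xs ! i)). \<forall>y\<in>slimv (induced H (map (star H) xs ! j)).
           card (fat_nbrs H x \<inter> fat_nbrs H y) \<le> 1 \<and>
           (card (fat_nbrs H x \<inter> fat_nbrs H y) = 1 \<longleftrightarrow> adj H x y))"
      (is "\<forall>i<_. \<forall>j<_. _ \<longrightarrow> ?compatible i j")
    proof (intro allI impI)
      fix i j assume ij: "i < length xs" "j < length xs" "i \<noteq> j"
      then have "Bmat H (xs ! i) (xs ! j) = 0"
        using B0 xs(2) distinct_i[OF ij] nth_mem[OF ij(1)] nth_mem[OF ij(2)] by blast
      then show "?compatible i j"
        using slim_i ij unfolding Bmat_zero_iff by simp
    qed
  qed
qed

lemma indecomposable_Bmat_nonzero:
  assumes hg: "hoffman_graph H" and ind: "indecomposable H" and two: "2 \<le> card (slimv H)"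
  shows "\<exists>x\<in>slimv H. \<exists>y\<in>slimv H. x \<noteq> y \<and> Bmat H x y \<noteq> 0"
proof (rule ccontr)
  assume "\<not> ?thesis"
  moreover obtain xs where "distinct xs" "set xs = slimv H"
    using finite_distinct_list[OF finite_slimv[OF hg]] by blast
  ultimately have "decomposition H (map (star H) xs)"
    using stars_decomposition[OF hg] by blast
  moreover have "length (map (star H) xs) \<ge> 2"
    using two \<open>distinct xs\<close> \<open>set xs = slimv H\<close> distinct_card by fastforce
  ultimately show False using ind unfolding indecomposable_def by blast
qed

lemma hiso_by_vertex_lists:
  assumes us: "distinct us" and ts: "distinct ts" and len: "length us = length ts"
    and vH: "verts H = set us" and vK: "verts K = set ts"
    and adj_corr: "\<forall>p\<in>set (zip us ts). \<forall>q\<in>set (zip us ts).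
                     adj H (fst p) (fst q) \<longleftrightarrow> adj K (snd p) (snd q)"
    and fat_corr: "\<forall>p\<in>set (zip us ts). fst p \<in> fatv H \<longleftrightarrow> snd p \<in> fatv K"
  shows "hiso H K"
proof -
  define n where "n = length us"
  define idx where "idx = the_inv_into {..<n} (nth us)"
  have bij_us: "bij_betw (nth us) {..<n} (set us)"
    using bij_betw_nth[OF us] n_def by simp
  have bij_ts: "bij_betw (nth ts) {..<n} (set ts)"
    using bij_betw_nth[OF ts] n_def len by simp
  have bij: "bij_betw (nth ts \<circ> idx) (set us) (set ts)"
    unfolding idx_def by (rule bij_betw_trans[OF bij_betw_the_inv_into[OF bij_us] bij_ts])
  have idx_nth: "idx (us ! i) = i" if "i < n" for i
    unfolding idx_def using the_inv_into_f_f[OF bij_betw_imp_inj_on[OF bij_us]] that by simp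
  have pair_i: "(us ! i, ts ! i) \<in> set (zip us ts)" if "i < n" for i
    using that len n_def by (auto simp: set_zip)
  have vert_i: "\<exists>i<n. u = us ! i" if "u \<in> verts H" for u
    using that vH n_def by (auto simp: in_set_conv_nth)
  show ?thesis
    unfolding hiso_def
  proof (intro exI conjI ballI)
    show "bij_betw (nth ts \<circ> idx) (verts H) (verts K)" using bij vH vK by simp
  next
    fix u v assume "u \<in> verts H" "v \<in> verts H"
    with vert_i obtain i j where ij: "i < n" "j < n" and "u = us ! i" "v = us ! j" by blast
    then show "adj H u v \<longleftrightarrow> adj K ((nth ts \<circ> idx) u) ((nth ts \<circ> idx) v)"
      using adj_corr pair_i[OF ij(1)] pair_i[OF ij(2)] idx_nth[OF ij(1)] idx_nth[OF ij(2)]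
      by fastforce
  next
    fix u assume "u \<in> verts H"
    with vert_i obtain i where i: "i < n" and "u = us ! i" by blast
    then show "u \<in> fatv H \<longleftrightarrow> (nth ts \<circ> idx) u \<in> fatv K"
      using fat_corr pair_i[OF i] idx_nth[OF i] by fastforce
  qed
qed

section \<open>The classification\<close>

lemma one_slim_classification:
  assumes hg: "hoffman_graph H" and fh: "fat_hoffman H"
    and lm: "lambda_min_ge H (-1 - (1 + sqrt 5) / 2)" and S: "slimv H = {x}"
  shows "hiso H H_I \<or> hiso H H_II"
proof -
  define F where "F = fat_nbrs H x"
  have fatv: "fatv H = F" using fatv_eq_Union_fat_nbrs[OF hg] S F_def by simp
  have verts: "verts H = insert x F" using verts_slim_fat[OF hg] S fatv by simp
  have xF: "x \<notin> F" using slim_not_fat[of x H] S fatv by simp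
  have "1 \<le> card F" "card F \<le> 2"
    using fat_hoffman_card[OF hg fh, of x] one_slim_fat_bound[OF hg lm S] S F_def by auto
  then have "card F = 1 \<or> card F = 2" by linarith
  then consider (one) f where "F = {f}" | (two) f g where "F = {f, g}" "f \<noteq> g"
    using card_1_singletonE card_2_iff by metis
  then show ?thesis
  proof cases
    case (one f)
    have "hiso H H_I"
      by (rule hiso_by_vertex_lists[where us="[x, f]" and ts="[SV 1, FV 1]"])
        (use one xF verts fatv hoffman_adj_irrefl[OF hg] adj_fat_iff[of f H x]
           adj_fat_iff'[OF hg, of f x] F_def in \<open>auto simp: H_I_def mk_hg_def\<close>)
    then show ?thesis ..
  next
    case (two f g)
    have "hiso H H_II"
      by (rule hiso_by_vertex_lists[where us="[x, f, g]" and ts="[SV 1, FV 1, FV 2]"])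
        (use two xF verts fatv hoffman_adj_irrefl[OF hg] hoffman_fat_not_adj[OF hg]
           adj_fat_iff[of f H x] adj_fat_iff'[OF hg, of f x]
           adj_fat_iff[of g H x] adj_fat_iff'[OF hg, of g x] F_def
         in \<open>auto simp: H_II_def mk_hg_def\<close>)
    then show ?thesis ..
  qed
qed

lemma small_set_configurations:
  assumes card: "1 \<le> card F" "card F \<le> 2" and g: "g \<in> F \<longleftrightarrow> \<not> a"
  obtains "F = {g}" "\<not> a"
    | f where "F = {f}" "f \<noteq> g" "a"
    | f where "F = {f, g}" "f \<noteq> g" "\<not> a"
    | f1 f2 where "F = {f1, f2}" "f1 \<noteq> f2" "f1 \<noteq> g" "f2 \<noteq> g" "a"
proof -
  have "card F = 1 \<or> card F = 2" using card by linarith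
  then show thesis
  proof
    assume "card F = 1"
    then obtain f where F: "F = {f}" by (rule card_1_singletonE)
    show thesis
    proof (cases "f = g")
      case True
      then show thesis using that(1) F g by simp
    next
      case False
      then show thesis using that(2)[OF F] F g by simp
    qed
  next
    assume "card F = 2"
    then obtain f1 f2 where F: "F = {f1, f2}" "f1 \<noteq> f2" unfolding card_2_iff by blast
    consider "g = f1" | "g = f2" | "g \<notin> {f1, f2}" by blast
    then show thesis
    proof cases
      case 1
      then have "F = {f2, g}" using F(1) by auto
      then show thesis using that(3) 1 F g by simp
    next
      case 2
      then show thesis using that(3)[of f1] F g by simp
    next
      case 3
      then show thesis using that(4)[OF F] F g by auto
    qed
  qed
qed

lemma two_slim_configurations:
  assumes hg: "hoffman_graph H" and S: "slimv H = {x, y}" and "x \<noteq> y"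
    and B: "Bmat H x y \<noteq> 0"
    and Fx: "1 \<le> card (fat_nbrs H x)" "card (fat_nbrs H x) \<le> 2"
    and Fy: "card (fat_nbrs H y) = 1"
  shows "hiso H H_III \<or> hiso H H_IV \<or> hiso H H_XVI \<or> hiso H H_XVII"
proof -
  obtain g where Fy_g: "fat_nbrs H y = {g}" using Fy card_1_singletonE by blast
  have fatv: "fatv H = fat_nbrs H x \<union> {g}"
    using fatv_eq_Union_fat_nbrs[OF hg] S Fy_g by simp
  have verts: "verts H = {x, y} \<union> fatv H" using verts_slim_fat[OF hg] S by simp
  have slim: "x \<notin> fatv H" "y \<notin> fatv H" using slim_not_fat[of _ H] S by auto
  text \<open>Since x and y have at most one common fat neighbour, B_xy \<noteq> 0 says
    they share g exactly when they are non-adjacent.\<close>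
  have share: "g \<in> fat_nbrs H x \<longleftrightarrow> \<not> adj H x y"
  proof -
    have "card (fat_nbrs H x \<inter> fat_nbrs H y) = (if g \<in> fat_nbrs H x then 1 else 0)"
      using Fy_g by auto
    then show ?thesis using B unfolding Bmat_zero_iff by (cases "g \<in> fat_nbrs H x") auto
  qed
  have adj_yx: "adj H y x \<longleftrightarrow> adj H x y"
    using hoffman_adj_sym[OF hg, of x y] hoffman_adj_sym[OF hg, of y x] by blast
  note adjacency = verts fatv slim Fy_g \<open>x \<noteq> y\<close> hoffman_adj_irrefl[OF hg]
    hoffman_fat_not_adj[OF hg] adj_fat_iff[of _ H x] adj_fat_iff[of _ H y]
    adj_fat_iff'[OF hg] adj_yx
  from Fx share consider (III) "fat_nbrs H x = {g}" "\<not> adj H x y"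
    | (IV) f where "fat_nbrs H x = {f}" "f \<noteq> g" "adj H x y"
    | (XVII) f where "fat_nbrs H x = {f, g}" "f \<noteq> g" "\<not> adj H x y"
    | (XVI) f1 f2 where "fat_nbrs H x = {f1, f2}" "f1 \<noteq> f2" "f1 \<noteq> g" "f2 \<noteq> g" "adj H x y"
    by (rule small_set_configurations)
  then show ?thesis
  proof cases
    case III
    have "hiso H H_III"
      by (rule hiso_by_vertex_lists[where us="[x, y, g]" and ts="[SV 1, SV 2, FV 1]"])
        (use III adjacency in \<open>simp_all add: H_III_def mk_hg_def insert_commute\<close>)
    then show ?thesis by blast
  next
    case (IV f)
    have "hiso H H_IV"
      by (rule hiso_by_vertex_lists[where us="[x, y, f, g]" and ts="[SV 1, SV 2, FV 1, FV 2]"])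
        (use IV adjacency in \<open>simp_all add: H_IV_def mk_hg_def insert_commute\<close>)
    then show ?thesis by blast
  next
    case (XVII f)
    have "hiso H H_XVII"
      by (rule hiso_by_vertex_lists[where us="[x, y, f, g]" and ts="[SV 1, SV 2, FV 1, FV 2]"])
        (use XVII adjacency in \<open>simp_all add: H_XVII_def mk_hg_def insert_commute\<close>)
    then show ?thesis by blast
  next
    case (XVI f1 f2)
    have "hiso H H_XVI"
      by (rule hiso_by_vertex_lists[where us="[x, y, f1, f2, g]"
            and ts="[SV 1, SV 2, FV 1, FV 2, FV 3]"])
        (use XVI adjacency in \<open>simp_all add: H_XVI_def mk_hg_def insert_commute\<close>)
    then show ?thesis by blast
  qed
qed

text \<open>With two slim vertices, indecomposability makes B_xy nonzero, the eigenvalue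
  bound leaves fat degrees 1 + 1 or 1 + 2, and up to swapping x and y we are in
  the situation of the previous lemma.\<close>
lemma two_slim_classification:
  assumes hg: "hoffman_graph H" and fh: "fat_hoffman H" and ind: "indecomposable H"
    and lm: "lambda_min_ge H (-1 - (1 + sqrt 5) / 2)" and two: "card (slimv H) = 2"
  shows "hiso H H_III \<or> hiso H H_IV \<or> hiso H H_XVI \<or> hiso H H_XVII"
proof -
  obtain x y where S: "slimv H = {x, y}" "x \<noteq> y" using two unfolding card_2_iff by blast
  then have S': "slimv H = {y, x}" "y \<noteq> x" by auto
  have B: "Bmat H x y \<noteq> 0" "Bmat H y x \<noteq> 0"
    using indecomposable_Bmat_nonzero[OF hg ind] two S Bmat_sym[OF hg, of x y] by auto
  have "card (fat_nbrs H x) + card (fat_nbrs H y) \<le> 3"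
    by (rule two_slim_fat_bound[OF hg lm S B(1)])
  moreover have "1 \<le> card (fat_nbrs H x)" "1 \<le> card (fat_nbrs H y)"
    using fat_hoffman_card[OF hg fh] S by auto
  ultimately consider "card (fat_nbrs H y) = 1" "card (fat_nbrs H x) \<le> 2"
    | "card (fat_nbrs H x) = 1" "card (fat_nbrs H y) \<le> 2" by linarith
  then show ?thesis
  proof cases
    case 1
    then show ?thesis
      using two_slim_configurations[OF hg S B(1)] \<open>1 \<le> card (fat_nbrs H x)\<close> by blast
  next
    case 2
    then show ?thesis
      using two_slim_configurations[OF hg S' B(2)] \<open>1 \<le> card (fat_nbrs H y)\<close> by blast
  qed
qed

theorem mainTheorem15:
  fixes H :: "'a hgraph"
  assumes "hoffman_graph H"
    and "fat_hoffman H"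
    and "indecomposable H"
    and "lambda_min_ge H (-1 - (1 + sqrt 5) / 2)"
    and "card (slimv H) \<le> 2"
  shows "hiso H H_I \<or> hiso H H_II \<or> hiso H H_III \<or> hiso H H_IV \<or>
         hiso H H_XVI \<or> hiso H H_XVII"
proof -
  have "card (slimv H) \<noteq> 0"
    using slimv_nonempty[OF assms(1)] finite_slimv[OF assms(1)] by simp
  then consider "card (slimv H) = 1" | "card (slimv H) = 2" using assms(5) by linarith
  then show ?thesis
  proof cases
    case 1
    then obtain x where "slimv H = {x}" by (rule card_1_singletonE)
    then show ?thesis using one_slim_classification[OF assms(1,2,4)] by blast
  next
    case 2
    then show ?thesis using two_slim_classification[OF assms(1-4)] by blast
  qed
qed

end
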